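(* Let $f\in\mathrm{Homeo}_+(\mathbb{R})$ satisfy $f(x+1)=f(x)+2$ for all $x\in\mathbb{R}$ and $f(0)=0$. For $r=p/2^q$ with $p,q\in\mathbb{Z}$ define $\bar r=f^{-q}(T_p(f^q(0)))$, where $T_p(x)=x+p$. Then the map $r\mapsto\bar r$ from $\mathbb{Q}_2$ to $\mathbb{R}$ is well defined (independent of the representation $r=p/2^q$), strictly increasing, fixes every integer, and satisfies $\overline{r+1}=\bar r+1$ for all $r\in\mathbb{Q}_2$.
   Context: $\mathbb{Q}_2=\{p/2^q:p,q\in\mathbb{Z}\}$ denotes the dyadic rationals; $\mathrm{Homeo}_+(\mathbb{R})$ is the group of increasing self-homeomorphisms of $\mathbb{R}$. *)

theory Defs
  imports Complex_Main
begin

definition int_iter :: "(real \<Rightarrow> real) \<Rightarrow> int \<Rightarrow> real \<Rightarrow> real" where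
  "int_iter f q = (if q \<ge> 0 then f ^^ nat q else (inv f) ^^ nat (- q))"

definition dyad_bar :: "(real \<Rightarrow> real) \<Rightarrow> int \<Rightarrow> int \<Rightarrow> real" where
  "dyad_bar f p q = int_iter f (- q) (int_iter f q 0 + real_of_int p)"

end

theory Submission
  imports Defs
begin

text \<open>Since f fixes 0, bar(p/2^q) = f^{-q}(p). The lift condition passes to g = f^{-1} as
  g(y + 2m) = g y + m, hence g^k(y + 2^k m) = g^k y + m and in particular g^k(2^k p) = p: bar is
  unchanged when p/2^q is rewritten as 2^k p/2^{q+k}. Bringing two dyadics to a common
  denominator 2^N with numerators P, P' thus gives bar = g^N(P) and bar' = g^N(P'), and the
  claims follow because g^N is strictly increasing and g^N(P + 2^N) = g^N(P) + 1.\<close>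

lemma int_iter_neg_nat: "int_iter f (- int k) = inv f ^^ k"
  unfolding int_iter_def by (cases "k = 0") auto

lemma int_iter_succ:
  assumes "bij f"
  shows "int_iter f (n + 1) x = f (int_iter f n x)"
proof (cases "n \<ge> 0")
  case True
  then have "nat (n + 1) = Suc (nat n)" by simp
  with True show ?thesis by (simp add: int_iter_def)
next
  case False
  then consider "n = -1" | "nat (- n) = Suc (nat (- (n + 1)))" "n + 1 < 0" by linarith
  then show ?thesis
    by cases (simp_all add: int_iter_def bij_is_surj[OF assms] surj_f_inv_f)
qed

lemma int_iter_pred:
  assumes "bij f"
  shows "int_iter f (n - 1) x = inv f (int_iter f n x)"
  using int_iter_succ[OF assms, of "n - 1" x] bij_is_inj[OF assms] by simp

lemma int_iter_add:
  assumes "bij f"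
  shows "int_iter f (a + b) x = int_iter f a (int_iter f b x)"
proof (induction a rule: int_induct[where k = 0])
  case base
  then show ?case by (simp add: int_iter_def)
next
  case (step1 i)
  then show ?case using int_iter_succ[OF assms, of "i + b"] int_iter_succ[OF assms, of i]
    by (simp add: algebra_simps)
next
  case (step2 i)
  then show ?case using int_iter_pred[OF assms, of "i + b"] int_iter_pred[OF assms, of i]
    by (simp add: algebra_simps)
qed

lemma int_iter_fixed_point:
  assumes "bij f" and "f c = c"
  shows "int_iter f n c = c"
proof (induction n rule: int_induct[where k = 0])
  case base
  then show ?case by (simp add: int_iter_def)
next
  case (step1 i)
  then show ?case using int_iter_succ[OF assms(1)] assms(2) by simp
next
  case (step2 i)
  then show ?case using int_iter_pred[OF assms(1)] assms by (metis bij_is_inj inv_f_f)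
qed

lemma lift_shift_int:
  assumes lift: "\<And>x. f (x + 1) = f x + 2"
  shows "f (x + real_of_int m) = f x + 2 * real_of_int m"
proof (induction m rule: int_induct[where k = 0])
  case base
  then show ?case by simp
next
  case (step1 i)
  have "f (x + real_of_int (i + 1)) = f (x + real_of_int i) + 2"
    using lift[of "x + real_of_int i"] by (simp add: add.assoc)
  with step1 show ?case by simp
next
  case (step2 i)
  have "f (x + real_of_int (i - 1)) + 2 = f (x + real_of_int i)"
    using lift[of "x + real_of_int (i - 1)"] by simp
  with step2 show ?case by simp
qed

lemma inv_lift_shift_int:
  assumes "bij f" and lift: "\<And>x. f (x + 1) = f x + 2"
  shows "inv f (y + 2 * real_of_int m) = inv f y + real_of_int m"
proof -
  have "f (inv f y + real_of_int m) = y + 2 * real_of_int m"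
    using lift_shift_int[of f, OF lift] bij_is_surj[OF assms(1)] by (simp add: surj_f_inv_f)
  then show ?thesis by (metis assms(1) bij_is_inj inv_f_f)
qed

lemma inv_lift_funpow_shift_int:
  assumes "bij f" and lift: "\<And>x. f (x + 1) = f x + 2"
  shows "(inv f ^^ k) (x + 2 ^ k * real_of_int m) = (inv f ^^ k) x + real_of_int m"
proof (induction k arbitrary: x)
  case 0
  then show ?case by simp
next
  case (Suc k)
  have "(inv f ^^ Suc k) (x + 2 ^ Suc k * real_of_int m)
      = (inv f ^^ k) (inv f (x + 2 * real_of_int (2 ^ k * m)))"
    by (simp add: funpow_Suc_right algebra_simps del: funpow.simps)
  also have "\<dots> = (inv f ^^ k) (inv f x + 2 ^ k * real_of_int m)"
    using inv_lift_shift_int[of f, OF assms, of x "2 ^ k * m"] by simp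
  also have "\<dots> = (inv f ^^ Suc k) x + real_of_int m"
    using Suc by (simp add: funpow_Suc_right del: funpow.simps)
  finally show ?case .
qed

lemma strict_mono_funpow:
  fixes g :: "'a::order \<Rightarrow> 'a"
  assumes "strict_mono g"
  shows "strict_mono (g ^^ k)"
  by (induction k) (simp_all add: strict_mono_def assms[THEN strict_monoD])

lemma dyad_bar_rescale:
  assumes "bij f" and lift: "\<And>x. f (x + 1) = f x + 2" and zero: "f 0 = 0"
  shows "dyad_bar f (2 ^ k * p) (q + int k) = dyad_bar f p q"
proof -
  have "dyad_bar f (2 ^ k * p) (q + int k)
      = int_iter f (- q + - int k) (real_of_int (2 ^ k * p))"
    by (simp add: dyad_bar_def int_iter_fixed_point[OF assms(1) zero] algebra_simps)
  also have "\<dots> = int_iter f (- q) ((inv f ^^ k) (0 + 2 ^ k * real_of_int p))"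
    by (simp only: int_iter_add[OF assms(1)] int_iter_neg_nat) simp
  also have "\<dots> = int_iter f (- q) (real_of_int p)"
  proof -
    have "(inv f ^^ k) 0 = 0"
      using int_iter_fixed_point[OF assms(1) zero, of "- int k"] by (simp only: int_iter_neg_nat)
    then show ?thesis by (simp only: inv_lift_funpow_shift_int[of f, OF assms(1,2)]) simp
  qed
  also have "\<dots> = dyad_bar f p q"
    by (simp add: dyad_bar_def int_iter_fixed_point[OF assms(1) zero])
  finally show ?thesis .
qed

lemma dyadic_at_scale:
  assumes "q \<le> int N"
  shows "real_of_int p / 2 powi q = real_of_int (2 ^ nat (int N - q) * p) / 2 ^ N"
proof -
  define k where "k = nat (int N - q)"
  have "(2::real) ^ N = 2 powi (q + int k)"
    using assms by (simp add: k_def)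
  also have "\<dots> = 2 powi q * 2 ^ k"
    by (simp add: power_int_add)
  finally show ?thesis
    by (simp add: k_def field_simps)
qed

lemma dyad_bar_at_scale:
  assumes "bij f" and lift: "\<And>x. f (x + 1) = f x + 2" and zero: "f 0 = 0"
    and "q \<le> int N"
  shows "dyad_bar f p q = (inv f ^^ N) (real_of_int (2 ^ nat (int N - q) * p))"
proof -
  have "dyad_bar f p q = dyad_bar f (2 ^ nat (int N - q) * p) (int N)"
    using dyad_bar_rescale[OF assms(1-3), of "nat (int N - q)" p q] assms(4) by simp
  then show ?thesis
    by (simp add: dyad_bar_def int_iter_fixed_point[OF assms(1) zero] int_iter_neg_nat)
qed

lemma dyad_bar_common_scale:
  assumes "bij f" and lift: "\<And>x. f (x + 1) = f x + 2" and zero: "f 0 = 0"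
  obtains N P P' where
    "real_of_int p / 2 powi q = real_of_int P / 2 ^ N" "dyad_bar f p q = (inv f ^^ N) (real_of_int P)"
    "real_of_int p' / 2 powi q' = real_of_int P' / 2 ^ N" "dyad_bar f p' q' = (inv f ^^ N) (real_of_int P')"
proof -
  define N where "N = nat (max (max q q') 0)"
  have "q \<le> int N" "q' \<le> int N" by (auto simp: N_def)
  then show thesis
    using that dyadic_at_scale dyad_bar_at_scale[OF assms] by blast
qed

lemma dyad_bar_int: "dyad_bar f n 0 = real_of_int n"
  by (simp add: dyad_bar_def int_iter_def)

lemma dyad_bar_well_defined:
  assumes "bij f" and lift: "\<And>x. f (x + 1) = f x + 2" and zero: "f 0 = 0"
    and "real_of_int p / 2 powi q = real_of_int p' / 2 powi q'"
  shows "dyad_bar f p q = dyad_bar f p' q'"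
proof -
  obtain N P P' where "real_of_int p / 2 powi q = real_of_int P / 2 ^ N"
    "dyad_bar f p q = (inv f ^^ N) (real_of_int P)"
    "real_of_int p' / 2 powi q' = real_of_int P' / 2 ^ N"
    "dyad_bar f p' q' = (inv f ^^ N) (real_of_int P')"
    by (rule dyad_bar_common_scale[OF assms(1-3)])
  moreover from this(1,3) assms(4) have "real_of_int P = real_of_int P'"
    by (simp add: field_simps)
  ultimately show ?thesis by simp
qed

lemma dyad_bar_strict_mono:
  assumes "strict_mono f" "surj f" and lift: "\<And>x. f (x + 1) = f x + 2" and zero: "f 0 = 0"
    and "real_of_int p / 2 powi q < real_of_int p' / 2 powi q'"
  shows "dyad_bar f p q < dyad_bar f p' q'"
proof -
  have bij: "bij f"
    using assms(1,2) by (simp add: bij_def strict_mono_imp_inj_on)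
  obtain N P P' where "real_of_int p / 2 powi q = real_of_int P / 2 ^ N"
    "dyad_bar f p q = (inv f ^^ N) (real_of_int P)"
    "real_of_int p' / 2 powi q' = real_of_int P' / 2 ^ N"
    "dyad_bar f p' q' = (inv f ^^ N) (real_of_int P')"
    by (rule dyad_bar_common_scale[OF bij lift zero])
  moreover from this(1,3) assms(5) have "real_of_int P / 2 ^ N < real_of_int P' / 2 ^ N"
    by simp
  then have "real_of_int P < real_of_int P'"
    by (simp add: divide_less_cancel)
  moreover have "strict_mono (inv f ^^ N)"
    by (rule strict_mono_funpow[OF strict_mono_inv[OF assms(1,2)]])
      (simp add: bij_is_inj[OF bij])
  ultimately show ?thesis by (simp add: strict_mono_less)
qed

lemma dyad_bar_add_one:
  assumes "bij f" and lift: "\<And>x. f (x + 1) = f x + 2" and zero: "f 0 = 0"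
    and "real_of_int p' / 2 powi q' = real_of_int p / 2 powi q + 1"
  shows "dyad_bar f p' q' = dyad_bar f p q + 1"
proof -
  obtain N P P' where "real_of_int p / 2 powi q = real_of_int P / 2 ^ N"
    "dyad_bar f p q = (inv f ^^ N) (real_of_int P)"
    "real_of_int p' / 2 powi q' = real_of_int P' / 2 ^ N"
    "dyad_bar f p' q' = (inv f ^^ N) (real_of_int P')"
    by (rule dyad_bar_common_scale[OF assms(1-3)])
  moreover from this(1,3) assms(4) have "real_of_int P' / 2 ^ N = real_of_int P / 2 ^ N + 1"
    by simp
  then have "real_of_int P' = real_of_int P + 2 ^ N * real_of_int 1"
    by (simp add: field_simps)
  ultimately show ?thesis
    using inv_lift_funpow_shift_int[of f, OF assms(1,2), of N "real_of_int P" 1] by simp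
qed

theorem mainTheorem3:
  fixes f :: "real \<Rightarrow> real"
  assumes incr: "strict_mono f"
    and cont: "continuous_on UNIV f"
    and onto: "surj f"
    and lift: "\<And>x. f (x + 1) = f x + 2"
    and zero: "f 0 = 0"
  shows "(\<forall>p q p' q'. real_of_int p / 2 powi q = real_of_int p' / 2 powi q'
             \<longrightarrow> dyad_bar f p q = dyad_bar f p' q')
       \<and> (\<forall>p q p' q'. real_of_int p / 2 powi q < real_of_int p' / 2 powi q'
             \<longrightarrow> dyad_bar f p q < dyad_bar f p' q')
       \<and> (\<forall>p q (n::int). real_of_int p / 2 powi q = real_of_int n
             \<longrightarrow> dyad_bar f p q = real_of_int n)
       \<and> (\<forall>p q p' q'. real_of_int p' / 2 powi q' = real_of_int p / 2 powi q + 1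
             \<longrightarrow> dyad_bar f p' q' = dyad_bar f p q + 1)"
proof -
  have bij: "bij f"
    using incr onto by (simp add: bij_def strict_mono_imp_inj_on)
  have "dyad_bar f p q = real_of_int n"
    if "real_of_int p / 2 powi q = real_of_int n" for p q n
    using dyad_bar_well_defined[OF bij lift zero, of p q n 0] that by (simp add: dyad_bar_int)
  then show ?thesis
    using dyad_bar_well_defined[OF bij lift zero] dyad_bar_add_one[OF bij lift zero]
      dyad_bar_strict_mono[OF incr onto lift zero] by blast
qed

end
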